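(* Let $\mathbb{X}$ be a finite-dimensional real Banach space. If a non-zero linear operator $T:\mathbb{X}\to\mathbb{X}$ preserves Birkhoff–James orthogonality at each $x\in\operatorname{Ext}B_{\mathbb{X}}$, then $T$ is bijective.
   Context: $u\perp_B v$ means $\|u+\lambda v\|\ge\|u\|$ for all real $\lambda$; $T$ preserves Birkhoff–James orthogonality at $x$ if $x\perp_B v\Rightarrow Tx\perp_B Tv$ for all $v$. $\operatorname{Ext}B_{\mathbb{X}}$ is the set of extreme points of the closed unit ball. *)

theory Defs
  imports "HOL-Analysis.Analysis"
begin

definition bj_orth :: "'a::real_normed_vector \<Rightarrow> 'a \<Rightarrow> bool" where
  "bj_orth u v \<longleftrightarrow> (\<forall>t::real. norm (u + t *\<^sub>R v) \<ge> norm u)"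

definition preserves_bj_at :: "('a::real_normed_vector \<Rightarrow> 'b::real_normed_vector) \<Rightarrow> 'a \<Rightarrow> bool" where
  "preserves_bj_at T x \<longleftrightarrow> (\<forall>v. bj_orth x v \<longrightarrow> bj_orth (T x) (T v))"

end

theory Submission
  imports Defs "HOL-Analysis.Analysis"
begin

(* Suppose T k = 0 for some k \<noteq> 0. If x is an extreme point of the unit ball with T x \<noteq> 0 and
   \<phi> is a linear functional attaining its maximum over the ball at x with \<phi> k \<noteq> 0, then x is
   Birkhoff-James orthogonal to the kernel of \<phi>, in particular to v = x - (\<phi> x / \<phi> k) k.
   Since T v = T x, preservation at x yields T x \<perp> T x, i.e. T x = 0.
   Such x and \<phi> are obtained by maximising over the ball the strictly convex quadratic
   |T y|^2 + \<epsilon> |y - s k|^2 for an auxiliary inner product: a maximiser of a strictly convex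
   function is an extreme point and the derivative there is a norming functional; a small \<epsilon>
   keeps T x \<noteq> 0, and a large s makes the derivative non-zero at k. In finite dimension,
   injectivity of T then gives bijectivity. *)

section \<open>Birkhoff-James orthogonality and norming functionals\<close>

lemma bj_orth_self_iff: "bj_orth u u \<longleftrightarrow> u = 0"
proof
  assume "bj_orth u u"
  hence "norm u \<le> norm (u + (-1) *\<^sub>R u)" unfolding bj_orth_def by blast
  thus "u = 0" by simp
qed (simp add: bj_orth_def)

lemma bj_orth_if_supporting_functional:
  fixes \<phi> :: "'a::real_normed_vector \<Rightarrow> real"
  assumes lin: "linear \<phi>" and x: "norm x \<le> 1"
    and supp: "\<And>y. norm y \<le> 1 \<Longrightarrow> \<phi> y \<le> \<phi> x"
    and k: "\<phi> k \<noteq> 0" and v: "\<phi> v = 0"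
  shows "bj_orth x v"
proof -
  have bound: "\<phi> w \<le> \<phi> x * norm w" for w
  proof (cases "w = 0")
    case True
    thus ?thesis by (simp add: linear_0[OF lin])
  next
    case False
    hence "\<phi> (w /\<^sub>R norm w) \<le> \<phi> x" by (intro supp) simp
    hence "\<phi> w / norm w \<le> \<phi> x" by (simp add: linear_scale[OF lin] divide_inverse mult.commute)
    thus ?thesis using False by (simp add: divide_le_eq mult.commute)
  qed
  have "\<bar>\<phi> k\<bar> \<le> \<phi> x * norm k"
    using bound[of k] bound[of "-k"] by (simp add: linear_neg[OF lin])
  with k have "0 < \<phi> x * norm k" by linarith
  hence pos: "\<phi> x > 0" by (simp add: zero_less_mult_iff)
  show ?thesis unfolding bj_orth_def
  proof
    fix t :: real
    have "\<phi> x = \<phi> (x + t *\<^sub>R v)" using v by (simp add: linear_add[OF lin] linear_scale[OF lin])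
    also have "\<dots> \<le> \<phi> x * norm (x + t *\<^sub>R v)" by (rule bound)
    finally have "1 \<le> norm (x + t *\<^sub>R v)" using pos by simp
    with x show "norm x \<le> norm (x + t *\<^sub>R v)" by simp
  qed
qed

lemma preserves_bj_at_supported_imp_zero:
  fixes T :: "'a::real_normed_vector \<Rightarrow> 'b::real_normed_vector" and \<phi> :: "'a \<Rightarrow> real"
  assumes lin: "linear T" and pres: "preserves_bj_at T x"
    and lin_\<phi>: "linear \<phi>" and x: "norm x \<le> 1"
    and supp: "\<And>y. norm y \<le> 1 \<Longrightarrow> \<phi> y \<le> \<phi> x"
    and k: "\<phi> k \<noteq> 0" "T k = 0"
  shows "T x = 0"
proof -
  define v where "v = x - (\<phi> x / \<phi> k) *\<^sub>R k"
  have "\<phi> v = 0" using k by (simp add: v_def linear_diff[OF lin_\<phi>] linear_scale[OF lin_\<phi>])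
  with lin_\<phi> x supp k(1) have "bj_orth x v" by (rule bj_orth_if_supporting_functional)
  hence "bj_orth (T x) (T v)" using pres by (simp add: preserves_bj_at_def)
  moreover have "T v = T x" using k by (simp add: v_def linear_diff[OF lin] linear_scale[OF lin])
  ultimately show ?thesis by (simp add: bj_orth_self_iff)
qed

section \<open>Coordinates in a finite-dimensional normed space\<close>

lemma obtain_independent_basis:
  fixes B0 :: "'a::real_vector set"
  assumes "finite B0" "span B0 = UNIV"
  obtains B :: "'a set" where "finite B" "independent B" "span B = UNIV"
proof -
  obtain B where B: "B \<subseteq> B0" "independent B" "B0 \<subseteq> span B"
    using maximal_independent_subset[of B0] by blast
  have "finite B" using B(1) assms(1) by (rule finite_subset)
  moreover have "span B = UNIV"
    using span_minimal[OF B(3) subspace_span] assms(2) by auto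
  ultimately show ?thesis using B(2) by (intro that)
qed

lemma sum_representation_basis:
  fixes B :: "'a::real_vector set"
  assumes "finite B" "independent B" "span B = UNIV"
  shows "(\<Sum>b\<in>B. representation B y b *\<^sub>R b) = y"
  using sum_representation_eq[OF assms(2) _ assms(1) order_refl, of y] assms(3) by simp

lemma linear_representation_basis:
  fixes B :: "'a::real_vector set"
  assumes "independent B" "span B = UNIV"
  shows "linear (\<lambda>y. representation B y b)"
  using assms by (intro linearI) (simp_all add: representation_add representation_scale)

lemma linear_inj_imp_surj_basis:
  fixes T :: "'a::real_vector \<Rightarrow> 'a" and B :: "'a set"
  assumes "finite B" "independent B" "span B = UNIV" "linear T" "inj T"
  shows "surj T"
proof -
  interpret fd: finite_dimensional_vector_space scaleR B
    by unfold_locales (use assms in \<open>auto simp: dependent_raw_def span_raw_def\<close>)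
  have "Vector_Spaces.linear (*\<^sub>R) (*\<^sub>R) T" using assms(4) by (simp add: linear_def)
  thus ?thesis by (rule fd.linear_inj_imp_surj[OF _ assms(5)])
qed

lemma coordinate_sphere_norm_bound:
  fixes B :: "'a::real_normed_vector set"
  assumes fB: "finite B" and iB: "independent B" and neB: "B \<noteq> {}"
  obtains c where "c > 0"
    and "\<And>a. (\<And>b. \<bar>a b\<bar> \<le> 1) \<Longrightarrow> (\<And>b. b \<notin> B \<Longrightarrow> a b = 0) \<Longrightarrow> \<exists>b\<in>B. \<bar>a b\<bar> = 1
           \<Longrightarrow> c \<le> norm (\<Sum>b\<in>B. a b *\<^sub>R b)"
proof -
  define F where "F b = (if b \<in> B then {-1..1} else {0::real})" for b
  define L where "L a = (\<Sum>b\<in>B. a b *\<^sub>R b)" for a :: "'a \<Rightarrow> real"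
  define S where "S = PiE UNIV F \<inter> (\<Union>b\<in>B. {a. \<bar>a b\<bar> = 1})"
  have "compactin (product_topology (\<lambda>_. euclidean) UNIV) (PiE UNIV F)"
    by (simp add: compactin_PiE F_def)
  hence "compact (PiE UNIV F)" by (simp add: euclidean_product_topology)
  moreover have "closed (\<Union>b\<in>B. {a::'a \<Rightarrow> real. \<bar>a b\<bar> = 1})"
    by (intro closed_UN fB ballI closed_Collect_eq continuous_intros continuous_on_product_coordinates)
  ultimately have cpt: "compact S" unfolding S_def by (simp add: compact_Int_closed)
  obtain b0 where "b0 \<in> B" using neB by auto
  hence "(\<lambda>b. if b = b0 then 1 else 0) \<in> S" unfolding S_def F_def by auto
  hence ne: "S \<noteq> {}" by auto
  have "continuous_on UNIV L"
    unfolding L_def by (intro continuous_intros continuous_on_product_coordinates)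
  hence "continuous_on S (\<lambda>a. norm (L a))"
    by (rule continuous_on_norm[OF continuous_on_subset[OF _ subset_UNIV]])
  then obtain a0 where a0: "a0 \<in> S" and min: "\<And>a. a \<in> S \<Longrightarrow> norm (L a0) \<le> norm (L a)"
    using continuous_attains_inf[OF cpt ne] by blast
  have "L a0 \<noteq> 0"
  proof
    assume "L a0 = 0"
    moreover obtain b where "b \<in> B" "\<bar>a0 b\<bar> = 1" using a0 unfolding S_def by auto
    ultimately have "dependent B" unfolding L_def dependent_finite[OF fB]
      by (metis abs_zero zero_neq_one)
    thus False using iB by simp
  qed
  moreover have "norm (L a0) \<le> norm (\<Sum>b\<in>B. a b *\<^sub>R b)"
    if "\<And>b. \<bar>a b\<bar> \<le> 1" "\<And>b. b \<notin> B \<Longrightarrow> a b = 0" "\<exists>b\<in>B. \<bar>a b\<bar> = 1" for a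
    using that by (fold L_def, intro min) (auto simp: S_def F_def abs_le_iff)
  ultimately show ?thesis using that[of "norm (L a0)"] by simp
qed

lemma representation_le_norm:
  fixes B :: "'a::real_normed_vector set"
  assumes fB: "finite B" and iB: "independent B" and sB: "span B = UNIV"
  obtains C where "C \<ge> 0" and "\<And>y b. \<bar>representation B y b\<bar> \<le> C * norm y"
proof (cases "B = {}")
  case True
  hence "representation B y b = 0" for y b using representation_ne_zero by blast
  thus ?thesis using that[of 0] by simp
next
  assume neB: "B \<noteq> {}"
  obtain c where c: "c > 0"
    and min: "\<And>a. (\<And>b. \<bar>a b\<bar> \<le> 1) \<Longrightarrow> (\<And>b. b \<notin> B \<Longrightarrow> a b = 0) \<Longrightarrow> \<exists>b\<in>B. \<bar>a b\<bar> = 1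
               \<Longrightarrow> c \<le> norm (\<Sum>b\<in>B. a b *\<^sub>R b)"
    using coordinate_sphere_norm_bound[OF fB iB neB] by blast
  have "\<bar>representation B y b\<bar> \<le> (1 / c) * norm y" for y b
  proof -
    define a where "a = representation B y"
    have out: "a b = 0" if "b \<notin> B" for b
      using representation_ne_zero[of B y b] that unfolding a_def by auto
    define m where "m = Max ((\<lambda>b. \<bar>a b\<bar>) ` B)"
    obtain bm where bm: "bm \<in> B" "\<bar>a bm\<bar> = m"
      using Max_in[of "(\<lambda>b. \<bar>a b\<bar>) ` B"] fB neB unfolding m_def
      by (metis (no_types, lifting) empty_is_image finite_imageI imageE)
    have le_m: "\<bar>a b\<bar> \<le> m" for b
      using fB out bm by (cases "b \<in> B") (auto simp: m_def)
    show ?thesis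
    proof (cases "m = 0")
      case True
      thus ?thesis using le_m[of b] c by (simp add: a_def)
    next
      case False
      hence m: "m > 0" using bm by auto
      have "c \<le> norm (\<Sum>b\<in>B. (a b / m) *\<^sub>R b)"
        using le_m out bm m by (intro min) (auto simp: abs_divide)
      also have "(\<Sum>b\<in>B. (a b / m) *\<^sub>R b) = (1 / m) *\<^sub>R (\<Sum>b\<in>B. a b *\<^sub>R b)"
        by (simp add: scaleR_sum_right)
      also have "\<dots> = (1 / m) *\<^sub>R y"
        unfolding a_def by (rule arg_cong[OF sum_representation_basis[OF fB iB sB]])
      finally have "m \<le> (1 / c) * norm y" using m c by (simp add: field_simps)
      thus ?thesis using le_m[of b] unfolding a_def by linarith
    qed
  qed
  thus ?thesis using that[of "1 / c"] c by simp
qed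

lemma bounded_linear_representation_basis:
  fixes B :: "'a::real_normed_vector set"
  assumes "finite B" "independent B" "span B = UNIV"
  shows "bounded_linear (\<lambda>y. representation B y b)"
proof -
  obtain C where C: "\<And>y b. \<bar>representation B y b\<bar> \<le> C * norm y"
    using representation_le_norm[OF assms] by metis
  have lin: "linear (\<lambda>y. representation B y b)"
    by (rule linear_representation_basis[OF assms(2,3)])
  show ?thesis
  proof (rule bounded_linear_intro[of _ C])
    show "norm (representation B y b) \<le> norm y * C" for y
      using C[of y b] by (simp add: mult.commute)
  qed (simp_all add: linear_add[OF lin] linear_scale[OF lin])
qed

lemma bounded_linear_basis:
  fixes T :: "'a::real_normed_vector \<Rightarrow> 'b::real_normed_vector" and B :: "'a set"
  assumes "finite B" "independent B" "span B = UNIV" "linear T"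
  shows "bounded_linear T"
proof -
  have "T = (\<lambda>y. \<Sum>b\<in>B. representation B y b *\<^sub>R T b)"
  proof
    fix y
    have "T y = T (\<Sum>b\<in>B. representation B y b *\<^sub>R b)"
      by (simp add: sum_representation_basis[OF assms(1-3)])
    thus "T y = (\<Sum>b\<in>B. representation B y b *\<^sub>R T b)"
      by (simp add: linear_sum[OF assms(4)] linear_scale[OF assms(4)])
  qed
  moreover have "bounded_linear (\<lambda>y. \<Sum>b\<in>B. representation B y b *\<^sub>R T b)"
    by (intro bounded_linear_sum bounded_linear_scaleR_left
        bounded_linear_compose[OF _ bounded_linear_representation_basis[OF assms(1-3)]])
  ultimately show ?thesis by (simp only:)
qed

lemma compact_if_bounded_closed_basis:
  fixes B :: "'a::real_normed_vector set" and S :: "'a set"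
  assumes fB: "finite B" and iB: "independent B" and sB: "span B = UNIV"
    and "bounded S" "closed S"
  shows "compact S"
proof -
  obtain C where C: "C \<ge> 0" "\<And>y b. \<bar>representation B y b\<bar> \<le> C * norm y"
    using representation_le_norm[OF fB iB sB] by metis
  obtain R where R: "\<And>y. y \<in> S \<Longrightarrow> norm y \<le> R"
    using \<open>bounded S\<close> bounded_iff by blast
  define F where "F b = (if b \<in> B then {-(C * R)..C * R} else {0::real})" for b
  define L where "L a = (\<Sum>b\<in>B. a b *\<^sub>R b)" for a :: "'a \<Rightarrow> real"
  have "compactin (product_topology (\<lambda>_. euclidean) UNIV) (PiE UNIV F)"
    by (simp add: compactin_PiE F_def)
  hence "compact (PiE UNIV F)" by (simp add: euclidean_product_topology)
  moreover have contL: "continuous_on UNIV L"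
    unfolding L_def by (intro continuous_intros continuous_on_product_coordinates)
  hence "closed (L -` S)" using \<open>closed S\<close> by (simp add: closed_vimage)
  ultimately have K: "compact (PiE UNIV F \<inter> L -` S)" by (simp add: compact_Int_closed)
  have "S = L ` (PiE UNIV F \<inter> L -` S)"
  proof
    show "S \<subseteq> L ` (PiE UNIV F \<inter> L -` S)"
    proof
      fix y assume y: "y \<in> S"
      have "representation B y b \<in> F b" for b
      proof (cases "b \<in> B")
        case True
        have "\<bar>representation B y b\<bar> \<le> C * R"
          using C(2)[of y b] mult_left_mono[OF R[OF y] C(1)] by linarith
        thus ?thesis using True by (simp add: F_def abs_le_iff)
      next
        case False
        thus ?thesis using representation_ne_zero[of B y b] by (auto simp: F_def)
      qed
      hence "representation B y \<in> PiE UNIV F" by (simp add: PiE_UNIV_domain)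
      moreover have "L (representation B y) = y"
        unfolding L_def by (rule sum_representation_basis[OF fB iB sB])
      ultimately show "y \<in> L ` (PiE UNIV F \<inter> L -` S)"
        using y by (intro image_eqI[of _ _ "representation B y"]) simp_all
    qed
  qed blast
  thus ?thesis
    using compact_continuous_image[OF continuous_on_subset[OF contL subset_UNIV] K] by simp
qed

section \<open>Maximising a strictly convex quadratic over the unit ball\<close>

lemma bilinear_diag_add:
  fixes h :: "'a::real_vector \<Rightarrow> 'a \<Rightarrow> real"
  assumes "bilinear h" "\<And>x y. h x y = h y x"
  shows "h (a + d) (a + d) = h a a + 2 * h a d + h d d"
  using assms(1) assms(2)[of d a] by (simp add: bilinear_ladd bilinear_radd)

lemma bilinear_diag_convex_comb:
  fixes h :: "'a::real_vector \<Rightarrow> 'a \<Rightarrow> real"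
  assumes "bilinear h" "\<And>x y. h x y = h y x"
  shows "h ((1 - u) *\<^sub>R a + u *\<^sub>R b) ((1 - u) *\<^sub>R a + u *\<^sub>R b)
    = (1 - u) * h a a + u * h b b - u * (1 - u) * h (a - b) (a - b)"
  using assms(1) assms(2)[of b a]
  by (simp add: bilinear_ladd bilinear_radd bilinear_lmul bilinear_rmul bilinear_lsub bilinear_rsub
      algebra_simps power2_eq_square)

lemma extreme_point_of_strict_maximizer:
  fixes G :: "'a::real_vector \<Rightarrow> real"
  assumes x: "x \<in> S" and max: "\<And>y. y \<in> S \<Longrightarrow> G y \<le> G x"
    and strict: "\<And>a b u. a \<in> S \<Longrightarrow> b \<in> S \<Longrightarrow> a \<noteq> b \<Longrightarrow> 0 < u \<Longrightarrow> u < 1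
                   \<Longrightarrow> G ((1 - u) *\<^sub>R a + u *\<^sub>R b) < (1 - u) * G a + u * G b"
  shows "x extreme_point_of S"
  unfolding extreme_point_of_def
proof (intro conjI ballI x notI)
  fix a b assume ab: "a \<in> S" "b \<in> S" and "x \<in> open_segment a b"
  then obtain u where "a \<noteq> b" "0 < u" "u < 1" "x = (1 - u) *\<^sub>R a + u *\<^sub>R b"
    by (auto simp: in_segment)
  hence "G x < (1 - u) * G a + u * G b" using strict ab by simp
  also have "\<dots> \<le> (1 - u) * G x + u * G x"
    using max ab \<open>0 < u\<close> \<open>u < 1\<close> by (intro add_mono mult_left_mono) auto
  finally show False by (simp add: algebra_simps)
qed

definition coord_inner :: "'a::real_vector set \<Rightarrow> 'a \<Rightarrow> 'a \<Rightarrow> real" where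
  "coord_inner B x y = (\<Sum>b\<in>B. representation B x b * representation B y b)"

locale continuous_inner_form =
  fixes h :: "'a::real_normed_vector \<Rightarrow> 'a \<Rightarrow> real"
  assumes bilinear: "bilinear h"
    and commute: "h x y = h y x"
    and positive: "x \<noteq> 0 \<Longrightarrow> 0 < h x x"
    and continuous: "continuous_on UNIV (case_prod h)"

lemma continuous_inner_form_coord_inner:
  fixes B :: "'a::real_normed_vector set"
  assumes fB: "finite B" and iB: "independent B" and sB: "span B = UNIV"
  shows "continuous_inner_form (coord_inner B)"
proof
  have lin: "linear (\<lambda>y. representation B y b)" for b
    by (rule linear_representation_basis[OF iB sB])
  have add: "coord_inner B (x + x') y = coord_inner B x y + coord_inner B x' y" for x x' y
    by (simp add: coord_inner_def linear_add[OF lin] distrib_right sum.distrib)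
  have scale: "coord_inner B (r *\<^sub>R x) y = r *\<^sub>R coord_inner B x y" for r x y
    by (simp add: coord_inner_def linear_scale[OF lin] sum_distrib_left mult.assoc)
  show comm: "coord_inner B x y = coord_inner B y x" for x y
    by (simp add: coord_inner_def mult.commute)
  show "bilinear (coord_inner B)"
    unfolding bilinear_def
  proof (intro conjI allI)
    show "linear (\<lambda>y. coord_inner B x y)" for x
      by (rule linearI) (simp_all only: comm[of x] add scale)
    show "linear (\<lambda>x. coord_inner B x y)" for y
      by (rule linearI) (simp_all only: add scale)
  qed
  show "0 < coord_inner B x x" if "x \<noteq> 0" for x
  proof -
    have "\<not> (\<forall>b\<in>B. representation B x b = 0)"
    proof
      assume "\<forall>b\<in>B. representation B x b = 0"
      hence "(\<Sum>b\<in>B. representation B x b *\<^sub>R b) = 0" by simp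
      thus False using that sum_representation_basis[OF fB iB sB, of x] by simp
    qed
    then obtain b where "b \<in> B" "representation B x b \<noteq> 0" by blast
    hence "0 < representation B x b * representation B x b"
      using not_real_square_gt_zero by blast
    thus ?thesis unfolding coord_inner_def by (rule sum_pos2[OF fB \<open>b \<in> B\<close>]) simp
  qed
  show "continuous_on UNIV (case_prod (coord_inner B))"
    unfolding coord_inner_def case_prod_unfold
    by (intro continuous_intros
        bounded_linear.continuous_on[OF bounded_linear_representation_basis[OF fB iB sB]])
qed

context continuous_inner_form
begin

lemma continuous_on_compose [continuous_intros]:
  "continuous_on S f \<Longrightarrow> continuous_on S g \<Longrightarrow> continuous_on S (\<lambda>y. h (f y) (g y))"
  using continuous_on_compose2[OF continuous, of S "\<lambda>y. (f y, g y)"] by (auto intro: continuous_on_Pair)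

lemma nonneg: "0 \<le> h x x"
  using positive[of x] bilinear_lzero[OF bilinear, of 0] by (cases "x = 0") auto

definition perturbed_quadratic :: "('a \<Rightarrow> 'a) \<Rightarrow> real \<Rightarrow> 'a \<Rightarrow> 'a \<Rightarrow> real" where
  "perturbed_quadratic T \<epsilon> c y = h (T y) (T y) + \<epsilon> * h (y - c) (y - c)"

definition perturbed_quadratic_deriv :: "('a \<Rightarrow> 'a) \<Rightarrow> real \<Rightarrow> 'a \<Rightarrow> 'a \<Rightarrow> 'a \<Rightarrow> real" where
  "perturbed_quadratic_deriv T \<epsilon> c x d = 2 * h (T x) (T d) + 2 * \<epsilon> * h (x - c) d"

lemma linear_perturbed_quadratic_deriv:
  assumes "linear T"
  shows "linear (perturbed_quadratic_deriv T \<epsilon> c x)"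
  by (rule linearI) (simp_all add: perturbed_quadratic_deriv_def linear_add[OF assms]
      linear_scale[OF assms] bilinear_radd[OF bilinear] bilinear_rmul[OF bilinear] algebra_simps)

lemma perturbed_quadratic_expansion:
  assumes "linear T"
  shows "perturbed_quadratic T \<epsilon> c (x + d)
    = perturbed_quadratic T \<epsilon> c x + perturbed_quadratic_deriv T \<epsilon> c x d + perturbed_quadratic T \<epsilon> 0 d"
proof -
  have "x + d - c = (x - c) + d" by simp
  thus ?thesis
    unfolding perturbed_quadratic_def perturbed_quadratic_deriv_def linear_add[OF assms]
    by (simp only: bilinear_diag_add[OF bilinear commute]) (simp add: algebra_simps)
qed

lemma perturbed_quadratic_strict_convex:
  assumes "linear T" "0 < \<epsilon>" "a \<noteq> b" "0 < u" "u < 1"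
  shows "perturbed_quadratic T \<epsilon> c ((1 - u) *\<^sub>R a + u *\<^sub>R b)
    < (1 - u) * perturbed_quadratic T \<epsilon> c a + u * perturbed_quadratic T \<epsilon> c b"
proof -
  have T: "T ((1 - u) *\<^sub>R a + u *\<^sub>R b) = (1 - u) *\<^sub>R T a + u *\<^sub>R T b"
    by (simp add: linear_add[OF assms(1)] linear_scale[OF assms(1)])
  have c: "(1 - u) *\<^sub>R a + u *\<^sub>R b - c = (1 - u) *\<^sub>R (a - c) + u *\<^sub>R (b - c)"
    by (simp add: algebra_simps)
  have "0 < h (T a - T b) (T a - T b) + \<epsilon> * h (a - b) (a - b)"
    using nonneg[of "T a - T b"] positive[of "a - b"] assms(2,3) by (simp add: add_nonneg_pos)
  hence "0 < u * (1 - u) * (h (T a - T b) (T a - T b) + \<epsilon> * h (a - b) (a - b))"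
    using assms(4,5) by simp
  thus ?thesis
    unfolding perturbed_quadratic_def T c bilinear_diag_convex_comb[OF bilinear commute]
    by (simp add: algebra_simps)
qed

lemma perturbed_quadratic_maximizer:
  assumes lin: "linear T" and "0 < \<epsilon>" and x: "x \<in> cball 0 1"
    and max: "\<And>y. y \<in> cball 0 1 \<Longrightarrow> perturbed_quadratic T \<epsilon> c y \<le> perturbed_quadratic T \<epsilon> c x"
  shows "x extreme_point_of cball 0 1"
    and "norm y \<le> 1 \<Longrightarrow> perturbed_quadratic_deriv T \<epsilon> c x y \<le> perturbed_quadratic_deriv T \<epsilon> c x x"
proof -
  show "x extreme_point_of cball 0 1"
    by (rule extreme_point_of_strict_maximizer[where G = "perturbed_quadratic T \<epsilon> c", OF x max])
      (use perturbed_quadratic_strict_convex[OF lin \<open>0 < \<epsilon>\<close>] in auto)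
next
  assume "norm y \<le> 1"
  have "0 \<le> perturbed_quadratic T \<epsilon> 0 (y - x)"
    using nonneg \<open>0 < \<epsilon>\<close> by (simp add: perturbed_quadratic_def)
  moreover have "perturbed_quadratic T \<epsilon> c (x + (y - x)) \<le> perturbed_quadratic T \<epsilon> c x"
    using max \<open>norm y \<le> 1\<close> by simp
  ultimately have "perturbed_quadratic_deriv T \<epsilon> c x (y - x) \<le> 0"
    unfolding perturbed_quadratic_expansion[OF lin] by linarith
  thus "perturbed_quadratic_deriv T \<epsilon> c x y \<le> perturbed_quadratic_deriv T \<epsilon> c x x"
    by (simp add: linear_diff[OF linear_perturbed_quadratic_deriv[OF lin]])
qed

lemma perturbed_quadratic_maximizer_not_in_kernel:
  assumes "0 < \<epsilon>" and w: "w \<in> S" and x: "x \<in> S"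
    and max: "\<And>y. y \<in> S \<Longrightarrow> perturbed_quadratic T \<epsilon> c y \<le> perturbed_quadratic T \<epsilon> c x"
    and small: "\<And>y. y \<in> S \<Longrightarrow> \<epsilon> * h (y - c) (y - c) < h (T w) (T w)"
  shows "T x \<noteq> 0"
proof
  assume "T x = 0"
  hence "perturbed_quadratic T \<epsilon> c x = \<epsilon> * h (x - c) (x - c)"
    by (simp add: perturbed_quadratic_def bilinear_lzero[OF bilinear])
  also have "\<dots> < h (T w) (T w)" by (rule small[OF x])
  also have "\<dots> \<le> perturbed_quadratic T \<epsilon> c w"
    using nonneg \<open>0 < \<epsilon>\<close> by (simp add: perturbed_quadratic_def)
  also have "\<dots> \<le> perturbed_quadratic T \<epsilon> c x" by (rule max[OF w])
  finally show False by simp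
qed

lemma perturbed_quadratic_deriv_kernel:
  assumes "T k = 0"
  shows "perturbed_quadratic_deriv T \<epsilon> (s *\<^sub>R k) x k = 2 * \<epsilon> * (h x k - s * h k k)"
  using assms by (simp add: perturbed_quadratic_deriv_def bilinear_rzero[OF bilinear]
      bilinear_lsub[OF bilinear] bilinear_lmul[OF bilinear] algebra_simps)

lemma exists_supported_extreme_point_off_kernel:
  fixes T :: "'a \<Rightarrow> 'a"
  assumes cpt: "compact (cball (0::'a) 1)" and lin: "linear T" and contT: "continuous_on UNIV T"
    and w: "T w \<noteq> 0" and k: "T k = 0" "k \<noteq> 0"
  obtains x and \<phi> :: "'a \<Rightarrow> real" where "x extreme_point_of cball 0 1" "T x \<noteq> 0" "linear \<phi>"
    "\<And>y. norm y \<le> 1 \<Longrightarrow> \<phi> y \<le> \<phi> x" "\<phi> k \<noteq> 0"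
proof -
  have ne: "cball (0::'a) 1 \<noteq> {}" by simp
  have contT': "continuous_on (cball 0 1) T" using contT by (rule continuous_on_subset) simp
  define w1 where "w1 = w /\<^sub>R norm w"
  have "w \<noteq> 0" using w linear_0[OF lin] by auto
  hence w1: "w1 \<in> cball 0 1" "T w1 \<noteq> 0" using w by (auto simp: w1_def linear_scale[OF lin])
  have kk: "0 < h k k" using positive k(2) .
  \<comment> \<open>The centre c = s k is pushed so far along k that the gradient of the penalty
    at any point of the ball does not vanish at k.\<close>
  have "continuous_on (cball 0 1) (\<lambda>y. \<bar>h y k\<bar>)" by (intro continuous_intros)
  then obtain y1 where y1: "\<And>y. y \<in> cball 0 1 \<Longrightarrow> \<bar>h y k\<bar> \<le> \<bar>h y1 k\<bar>"
    using continuous_attains_sup[OF cpt ne] by blast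
  define s where "s = \<bar>h y1 k\<bar> / h k k + 1"
  have "s * h k k = \<bar>h y1 k\<bar> + h k k" using kk by (simp add: s_def field_simps)
  hence s: "\<bar>h y k\<bar> < s * h k k" if "y \<in> cball 0 1" for y
    using y1[OF that] kk by linarith
  define c where "c = s *\<^sub>R k"
  \<comment> \<open>The weight \<open>\<epsilon>\<close> is so small that no maximiser lies in the kernel of T.\<close>
  have "continuous_on (cball 0 1) (\<lambda>y. h (y - c) (y - c))" by (intro continuous_intros)
  then obtain y2 where D: "\<And>y. y \<in> cball 0 1 \<Longrightarrow> h (y - c) (y - c) \<le> h (y2 - c) (y2 - c)"
    using continuous_attains_sup[OF cpt ne] by blast
  define \<epsilon> where "\<epsilon> = h (T w1) (T w1) / (h (y2 - c) (y2 - c) + 1)"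
  have \<epsilon>: "0 < \<epsilon>" "\<epsilon> * h (y2 - c) (y2 - c) < h (T w1) (T w1)"
    using positive[OF w1(2)] nonneg[of "y2 - c"] by (simp_all add: \<epsilon>_def field_simps)
  have small: "\<epsilon> * h (y - c) (y - c) < h (T w1) (T w1)" if "y \<in> cball 0 1" for y
    using mult_left_mono[OF D[OF that] less_imp_le[OF \<epsilon>(1)]] \<epsilon>(2) by linarith
  have "continuous_on (cball 0 1) (perturbed_quadratic T \<epsilon> c)"
    unfolding perturbed_quadratic_def by (intro continuous_intros contT')
  then obtain x where x: "x \<in> cball 0 1"
    and max: "\<And>y. y \<in> cball 0 1 \<Longrightarrow> perturbed_quadratic T \<epsilon> c y \<le> perturbed_quadratic T \<epsilon> c x"
    using continuous_attains_sup[OF cpt ne] by blast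
  have Tx: "T x \<noteq> 0"
    by (rule perturbed_quadratic_maximizer_not_in_kernel[OF \<epsilon>(1) w1(1) x]) (fact max, fact small)
  have deriv_k: "perturbed_quadratic_deriv T \<epsilon> c x k \<noteq> 0"
    using s[OF x] \<epsilon>(1) by (simp add: c_def perturbed_quadratic_deriv_kernel[of T k, OF k(1)] abs_less_iff)
  have ext: "x extreme_point_of cball 0 1"
    by (rule perturbed_quadratic_maximizer(1)[OF lin \<epsilon>(1) x]) (fact max)
  have supp: "perturbed_quadratic_deriv T \<epsilon> c x y \<le> perturbed_quadratic_deriv T \<epsilon> c x x"
    if "norm y \<le> 1" for y
    by (rule perturbed_quadratic_maximizer(2)[OF lin \<epsilon>(1) x _ that]) (fact max)
  show ?thesis
    by (rule that[OF ext Tx linear_perturbed_quadratic_deriv[OF lin]]) (use supp deriv_k in auto)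
qed

end

theorem mainTheorem11:
  fixes T :: "'a::real_normed_vector \<Rightarrow> 'a"
  assumes fin_dim: "\<exists>B. finite B \<and> span B = (UNIV :: 'a set)"
    and lin: "linear T"
    and nonzero: "T \<noteq> (\<lambda>x. 0)"
    and pres: "\<And>x. x extreme_point_of cball 0 1 \<Longrightarrow> preserves_bj_at T x"
  shows "bij T"
proof -
  obtain B :: "'a set" where B: "finite B" "independent B" "span B = UNIV"
    using fin_dim obtain_independent_basis by metis
  interpret continuous_inner_form "coord_inner B"
    by (rule continuous_inner_form_coord_inner[OF B])
  have cpt: "compact (cball (0::'a) 1)"
    by (rule compact_if_bounded_closed_basis[OF B]) simp_all
  have contT: "continuous_on UNIV T"
    by (rule linear_continuous_on[OF bounded_linear_basis[OF B lin]])
  obtain w where w: "T w \<noteq> 0" using nonzero by auto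
  have "inj T"
  proof (rule ccontr)
    assume "\<not> inj T"
    then obtain k where k: "T k = 0" "k \<noteq> 0" using linear_injective_0[OF lin] by blast
    obtain x and \<phi> :: "'a \<Rightarrow> real" where x: "x extreme_point_of cball 0 1" "T x \<noteq> 0"
      and \<phi>: "linear \<phi>" "\<And>y. norm y \<le> 1 \<Longrightarrow> \<phi> y \<le> \<phi> x" "\<phi> k \<noteq> 0"
      using exists_supported_extreme_point_off_kernel[OF cpt lin contT w k] by metis
    have "norm x \<le> 1" using x(1) by (simp add: extreme_point_of_def)
    with lin pres[OF x(1)] \<phi>(1) have "T x = 0"
      by (rule preserves_bj_at_supported_imp_zero) (use \<phi>(2,3) k(1) in auto)
    with x(2) show False by contradiction
  qed
  thus ?thesis using linear_inj_imp_surj_basis[OF B lin] by (simp add: bij_def)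
qed

end
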